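(* Let $N\geq3$, $2^*=\frac{2N}{N-2}$, let $\Omega\subset\mathbb{R}^N$ be a bounded smooth domain star-shaped with respect to the origin, and let $f\in C(\mathbb{R},\mathbb{R})$, $f(0)=0$, satisfy: there exist $2+\frac4N<\alpha\leq\beta<2^*$ with $0<\alpha F(u)\leq f(u)u\leq\beta F(u)$ for all $u\neq0$, where $F(u)=\int_0^uf(s)ds$. Let $c>0$. Then $\inf_{u\in\mathcal G}E(u)>0$, and every sequence $\{u_n\}\subset\mathcal G$ with $\limsup_{n\to\infty}E(u_n)<+\infty$ is bounded in $H_0^1(\Omega)$.
   Context: $u^+=\max\{u,0\}$; $f_+(t)=f(t)$ for $t\geq0$ and $f_+(t)=0$ for $t<0$; $F_+(t)=\int_0^tf_+(s)ds$. $S_c^+=\{u\in H_0^1(\Omega):\int_\Omega|u^+|^2dx=c\}$, $E(u)=\frac12\int_\Omega|\nabla u|^2dx-\int_\Omega F_+(u)dx$, and $\mathcal G=\{u\in S_c^+:\int_\Omega|\nabla u|^2dx>\frac N2\int_\Omega f_+(u)u^+dx-N\int_\Omega F_+(u)dx\}$. *)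

theory Defs
  imports "HOL-Analysis.Analysis" "HOL-Library.Liminf_Limsup"
begin

text \<open>f is C-infinity on U: f is differentiable on U and every first partial
  derivative is again C-infinity on U (coinductively: partial derivatives of all orders exist).\<close>
coinductive smooth_on :: "'a::euclidean_space set \<Rightarrow> ('a \<Rightarrow> real) \<Rightarrow> bool" where
  "f differentiable_on U \<Longrightarrow> (\<forall>i\<in>Basis. smooth_on U (\<lambda>x. frechet_derivative f (at x) i))
     \<Longrightarrow> smooth_on U f"

definition sgrad :: "('a::euclidean_space \<Rightarrow> real) \<Rightarrow> 'a \<Rightarrow> 'a" where
  "sgrad \<phi> x = (\<Sum>i\<in>Basis. frechet_derivative \<phi> (at x) i *\<^sub>R i)"

definition test_fun :: "'a::euclidean_space set \<Rightarrow> ('a \<Rightarrow> real) \<Rightarrow> bool" where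
  "test_fun \<Omega> \<phi> \<longleftrightarrow> smooth_on UNIV \<phi> \<and> compact (closure {x. \<phi> x \<noteq> 0})
      \<and> closure {x. \<phi> x \<noteq> 0} \<subseteq> \<Omega>"

definition smooth_bounded_domain :: "'a::euclidean_space set \<Rightarrow> bool" where
  "smooth_bounded_domain \<Omega> \<longleftrightarrow> open \<Omega> \<and> connected \<Omega> \<and> \<Omega> \<noteq> {} \<and> bounded \<Omega> \<and>
     (\<forall>p\<in>frontier \<Omega>. \<exists>r>0. \<exists>\<rho>. smooth_on UNIV \<rho> \<and> (\<forall>x\<in>ball p r. sgrad \<rho> x \<noteq> 0) \<and>
        \<Omega> \<inter> ball p r = {x\<in>ball p r. \<rho> x < 0})"

definition star_shaped_origin :: "'a::real_vector set \<Rightarrow> bool" where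
  "star_shaped_origin \<Omega> \<longleftrightarrow> (\<forall>x\<in>\<Omega>. closed_segment 0 x \<subseteq> \<Omega>)"

definition weak_grad :: "'a::euclidean_space set \<Rightarrow> ('a \<Rightarrow> real) \<Rightarrow> ('a \<Rightarrow> 'a) \<Rightarrow> bool" where
  "weak_grad \<Omega> u G \<longleftrightarrow> set_borel_measurable lebesgue \<Omega> G \<and>
     set_integrable lebesgue \<Omega> (\<lambda>x. (norm (G x))\<^sup>2) \<and>
     (\<forall>\<phi>. test_fun \<Omega> \<phi> \<longrightarrow> (\<forall>i\<in>Basis.
        (LINT x:\<Omega>|lebesgue. u x * (sgrad \<phi> x \<bullet> i)) = - (LINT x:\<Omega>|lebesgue. (G x \<bullet> i) * \<phi> x)))"

text \<open>H_0^1(Omega): closure of the test functions in the H^1 norm.\<close>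
definition H01 :: "'a::euclidean_space set \<Rightarrow> ('a \<Rightarrow> real) set" where
  "H01 \<Omega> = {u. set_borel_measurable lebesgue \<Omega> u \<and> set_integrable lebesgue \<Omega> (\<lambda>x. (u x)\<^sup>2) \<and>
     (\<exists>G. weak_grad \<Omega> u G \<and> (\<exists>\<phi>::nat \<Rightarrow> 'a \<Rightarrow> real. (\<forall>k. test_fun \<Omega> (\<phi> k)) \<and>
        (\<lambda>k. LINT x:\<Omega>|lebesgue. (\<phi> k x - u x)\<^sup>2) \<longlonglongrightarrow> 0 \<and>
        (\<lambda>k. LINT x:\<Omega>|lebesgue. (norm (sgrad (\<phi> k) x - G x))\<^sup>2) \<longlonglongrightarrow> 0))}"

definition wgrad :: "'a::euclidean_space set \<Rightarrow> ('a \<Rightarrow> real) \<Rightarrow> 'a \<Rightarrow> 'a" where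
  "wgrad \<Omega> u = (SOME G. weak_grad \<Omega> u G)"

definition dirichlet :: "'a::euclidean_space set \<Rightarrow> ('a \<Rightarrow> real) \<Rightarrow> real" where
  "dirichlet \<Omega> u = (LINT x:\<Omega>|lebesgue. (norm (wgrad \<Omega> u x))\<^sup>2)"

definition H1_norm2 :: "'a::euclidean_space set \<Rightarrow> ('a \<Rightarrow> real) \<Rightarrow> real" where
  "H1_norm2 \<Omega> u = (LINT x:\<Omega>|lebesgue. (u x)\<^sup>2) + dirichlet \<Omega> u"

definition prim :: "(real \<Rightarrow> real) \<Rightarrow> real \<Rightarrow> real" where
  "prim f t = (if 0 \<le> t then integral {0..t} f else - integral {t..0} f)"

definition fplus :: "(real \<Rightarrow> real) \<Rightarrow> real \<Rightarrow> real" where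
  "fplus f t = (if 0 \<le> t then f t else 0)"

definition Fplus :: "(real \<Rightarrow> real) \<Rightarrow> real \<Rightarrow> real" where
  "Fplus f = prim (fplus f)"

definition Sc_plus :: "'a::euclidean_space set \<Rightarrow> real \<Rightarrow> ('a \<Rightarrow> real) set" where
  "Sc_plus \<Omega> c = {u\<in>H01 \<Omega>. (LINT x:\<Omega>|lebesgue. (max (u x) 0)\<^sup>2) = c}"

definition energy :: "'a::euclidean_space set \<Rightarrow> (real \<Rightarrow> real) \<Rightarrow> ('a \<Rightarrow> real) \<Rightarrow> real" where
  "energy \<Omega> f u = dirichlet \<Omega> u / 2 - (LINT x:\<Omega>|lebesgue. Fplus f (u x))"

definition Gset :: "'a::euclidean_space set \<Rightarrow> (real \<Rightarrow> real) \<Rightarrow> real \<Rightarrow> ('a \<Rightarrow> real) set" where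
  "Gset \<Omega> f c = {u\<in>Sc_plus \<Omega> c.
     dirichlet \<Omega> u > real DIM('a) / 2 * (LINT x:\<Omega>|lebesgue. fplus f (u x) * max (u x) 0)
                      - real DIM('a) * (LINT x:\<Omega>|lebesgue. Fplus f (u x))}"

end

theory Submission
  imports Defs
begin

text \<open>On the constraint set G the Pohozaev-type inequality combined with the
  Ambrosetti--Rabinowitz bounds \<open>\<alpha> F\<^sub>+ \<le> f\<^sub>+(u) u\<^sup>+ \<le> \<beta> F\<^sub>+\<close> gives
  \<open>E(u) \<ge> (1/2 - 1/m) \<integral>|\<nabla>u|\<^sup>2\<close> with \<open>m = N(\<alpha>/2 - 1) > 2\<close>.
  If \<open>\<Omega> \<subseteq> B\<^sub>R\<close>, testing the weak gradient of \<open>u \<in> H\<^sub>0\<^sup>1(\<Omega>)\<close> against \<open>\<phi> x\<^sub>i\<close> and passing to the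
  limit along the approximating test functions yields \<open>\<integral>u\<^sup>2 = -2 \<integral>u (\<partial>\<^sub>iu) x\<^sub>i\<close>, hence by
  Cauchy--Schwarz the Poincare inequality \<open>\<integral>u\<^sup>2 \<le> 4R\<^sup>2 \<integral>|\<nabla>u|\<^sup>2\<close>.
  As \<open>c = \<integral>(u\<^sup>+)\<^sup>2 \<le> \<integral>u\<^sup>2\<close>, the energy on G is at least \<open>(1/2 - 1/m) c / (4R\<^sup>2) > 0\<close>, and a bound
  on the energy bounds the Dirichlet integral and therefore the \<open>H\<^sup>1\<close> norm.\<close>

definition square_integrable :: "'a measure \<Rightarrow> ('a \<Rightarrow> real) \<Rightarrow> bool" where
  "square_integrable M f \<longleftrightarrow> f \<in> borel_measurable M \<and> integrable M (\<lambda>x. (f x)\<^sup>2)"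

lemma square_integrable_bound:
  assumes f: "square_integrable M f" and g: "g \<in> borel_measurable M"
    and le: "AE x in M. \<bar>g x\<bar> \<le> C * \<bar>f x\<bar>"
  shows "square_integrable M g"
  unfolding square_integrable_def
proof
  show "integrable M (\<lambda>x. (g x)\<^sup>2)"
  proof (rule Bochner_Integration.integrable_bound)
    show "integrable M (\<lambda>x. C\<^sup>2 * (f x)\<^sup>2)" using f by (simp add: square_integrable_def)
    show "(\<lambda>x. (g x)\<^sup>2) \<in> borel_measurable M" using g by measurable
    show "AE x in M. norm ((g x)\<^sup>2) \<le> norm (C\<^sup>2 * (f x)\<^sup>2)"
      using le
    proof eventually_elim
      case (elim x)
      then have "\<bar>g x\<bar> \<le> \<bar>C * f x\<bar>"
        by (metis abs_ge_self abs_mult order_trans mult_right_mono abs_ge_zero)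
      then have "(g x)\<^sup>2 \<le> (C * f x)\<^sup>2" by (simp only: abs_le_square_iff)
      then show ?case by (simp add: power_mult_distrib)
    qed
  qed
qed (rule g)

lemma square_integrable_add:
  assumes f: "square_integrable M f" and g: "square_integrable M g"
  shows "square_integrable M (\<lambda>x. f x + g x)"
  unfolding square_integrable_def
proof
  have [measurable]: "f \<in> borel_measurable M" "g \<in> borel_measurable M"
    using f g by (simp_all add: square_integrable_def)
  show "(\<lambda>x. f x + g x) \<in> borel_measurable M" by measurable
  show "integrable M (\<lambda>x. (f x + g x)\<^sup>2)"
  proof (rule Bochner_Integration.integrable_bound)
    show "integrable M (\<lambda>x. 2 * (f x)\<^sup>2 + 2 * (g x)\<^sup>2)"
      using f g by (simp add: square_integrable_def)
    have "(f x + g x)\<^sup>2 \<le> 2 * (f x)\<^sup>2 + 2 * (g x)\<^sup>2" for x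
      using sum_squares_bound[of "f x" "g x"] by (simp add: power2_sum)
    then show "AE x in M. norm ((f x + g x)\<^sup>2) \<le> norm (2 * (f x)\<^sup>2 + 2 * (g x)\<^sup>2)" by simp
  qed measurable
qed

lemma square_integrable_diff:
  assumes "square_integrable M f" "square_integrable M g"
  shows "square_integrable M (\<lambda>x. f x - g x)"
proof -
  have "square_integrable M (\<lambda>x. - g x)" using assms(2) by (simp add: square_integrable_def)
  then show ?thesis using square_integrable_add[OF assms(1)] by fastforce
qed

lemma square_integrable_mult_integrable:
  assumes f: "square_integrable M f" and g: "square_integrable M g"
  shows "integrable M (\<lambda>x. f x * g x)"
proof (rule Bochner_Integration.integrable_bound)
  have [measurable]: "f \<in> borel_measurable M" "g \<in> borel_measurable M"
    using f g by (simp_all add: square_integrable_def)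
  show "integrable M (\<lambda>x. (f x)\<^sup>2 + (g x)\<^sup>2)" using f g by (simp add: square_integrable_def)
  have "\<bar>f x * g x\<bar> \<le> (f x)\<^sup>2 + (g x)\<^sup>2" for x
  proof -
    have "\<bar>f x * g x\<bar> \<le> 2 * \<bar>f x * g x\<bar>" by simp
    also have "\<dots> \<le> (f x)\<^sup>2 + (g x)\<^sup>2"
      using sum_squares_bound[of "\<bar>f x\<bar>" "\<bar>g x\<bar>"] by (simp add: abs_mult mult.assoc)
    finally show ?thesis .
  qed
  then show "AE x in M. norm (f x * g x) \<le> norm ((f x)\<^sup>2 + (g x)\<^sup>2)" by simp
  show "(\<lambda>x. f x * g x) \<in> borel_measurable M" by measurable
qed

lemma Cauchy_Schwarz_integral:
  assumes f: "square_integrable M f" and g: "square_integrable M g"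
  shows "(\<integral>x. \<bar>f x * g x\<bar> \<partial>M)\<^sup>2 \<le> (\<integral>x. (f x)\<^sup>2 \<partial>M) * (\<integral>x. (g x)\<^sup>2 \<partial>M)"
proof -
  have [measurable]: "f \<in> borel_measurable M" "g \<in> borel_measurable M"
    using f g by (simp_all add: square_integrable_def)
  have nn: "(\<integral>\<^sup>+x. ennreal (h x) \<partial>M) = ennreal (\<integral>x. h x \<partial>M)"
    if "integrable M h" "\<And>x. 0 \<le> h x" for h
    using nn_integral_eq_integral[OF that(1)] that(2) by simp
  have sq: "ennreal ((h x)\<^sup>2) = (ennreal \<bar>h x\<bar>)\<^sup>2" for h :: "'a \<Rightarrow> real" and x
    by (metis abs_ge_zero ennreal_power power2_abs)
  have "(\<integral>\<^sup>+x. ennreal \<bar>f x\<bar> * ennreal \<bar>g x\<bar> \<partial>M) = ennreal (\<integral>x. \<bar>f x * g x\<bar> \<partial>M)"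
    using nn[of "\<lambda>x. \<bar>f x * g x\<bar>"] integrable_abs[OF square_integrable_mult_integrable[OF f g]]
    by (simp add: abs_mult ennreal_mult)
  then have "ennreal ((\<integral>x. \<bar>f x * g x\<bar> \<partial>M)\<^sup>2) = (\<integral>\<^sup>+x. ennreal \<bar>f x\<bar> * ennreal \<bar>g x\<bar> \<partial>M)\<^sup>2"
    by (simp add: ennreal_power)
  also have "\<dots> \<le> (\<integral>\<^sup>+x. (ennreal \<bar>f x\<bar>)\<^sup>2 \<partial>M) * (\<integral>\<^sup>+x. (ennreal \<bar>g x\<bar>)\<^sup>2 \<partial>M)"
    by (rule Cauchy_Schwarz_nn_integral) measurable
  also have "\<dots> = ennreal ((\<integral>x. (f x)\<^sup>2 \<partial>M) * (\<integral>x. (g x)\<^sup>2 \<partial>M))"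
    using nn[of "\<lambda>x. (f x)\<^sup>2"] nn[of "\<lambda>x. (g x)\<^sup>2"] f g
    by (simp add: square_integrable_def sq ennreal_mult)
  finally show ?thesis by (simp add: ennreal_le_iff)
qed

lemma tendsto_integral_mult_square_integrable:
  assumes a: "square_integrable M a" and b: "square_integrable M b"
    and as: "\<And>k. square_integrable M (as k)"
    and lim: "(\<lambda>k. \<integral>x. (as k x - a x)\<^sup>2 \<partial>M) \<longlonglongrightarrow> 0"
  shows "(\<lambda>k. \<integral>x. as k x * b x \<partial>M) \<longlonglongrightarrow> (\<integral>x. a x * b x \<partial>M)"
proof -
  have bound: "norm ((\<integral>x. as k x * b x \<partial>M) - (\<integral>x. a x * b x \<partial>M))
      \<le> sqrt ((\<integral>x. (as k x - a x)\<^sup>2 \<partial>M) * (\<integral>x. (b x)\<^sup>2 \<partial>M))" for k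
  proof -
    have d: "square_integrable M (\<lambda>x. as k x - a x)" by (rule square_integrable_diff[OF as a])
    have "(\<integral>x. as k x * b x \<partial>M) - (\<integral>x. a x * b x \<partial>M) = (\<integral>x. (as k x - a x) * b x \<partial>M)"
      using square_integrable_mult_integrable[OF as b] square_integrable_mult_integrable[OF a b]
      by (simp add: left_diff_distrib)
    also have "norm \<dots> \<le> (\<integral>x. \<bar>(as k x - a x) * b x\<bar> \<partial>M)"
      using integral_norm_bound by force
    also have "\<dots> \<le> sqrt ((\<integral>x. (as k x - a x)\<^sup>2 \<partial>M) * (\<integral>x. (b x)\<^sup>2 \<partial>M))"
      by (rule real_le_rsqrt[OF Cauchy_Schwarz_integral[OF d b]])
    finally show ?thesis .
  qed
  have "(\<lambda>k. sqrt ((\<integral>x. (as k x - a x)\<^sup>2 \<partial>M) * (\<integral>x. (b x)\<^sup>2 \<partial>M))) \<longlonglongrightarrow> sqrt (0 * (\<integral>x. (b x)\<^sup>2 \<partial>M))"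
    by (intro tendsto_real_sqrt tendsto_mult tendsto_const lim)
  then have "(\<lambda>k. (\<integral>x. as k x * b x \<partial>M) - (\<integral>x. a x * b x \<partial>M)) \<longlonglongrightarrow> 0"
    using Lim_null_comparison[OF always_eventually[OF allI[OF bound]]] by simp
  then show ?thesis by (rule LIM_zero_cancel)
qed

lemma tendsto_inner_square_integral:
  fixes F :: "nat \<Rightarrow> 'a \<Rightarrow> 'b::euclidean_space"
  assumes [measurable]: "\<And>k. F k \<in> borel_measurable M" "G \<in> borel_measurable M"
    and F: "\<And>k. square_integrable M (\<lambda>x. norm (F k x))"
    and G: "square_integrable M (\<lambda>x. norm (G x))"
    and lim: "(\<lambda>k. \<integral>x. (norm (F k x - G x))\<^sup>2 \<partial>M) \<longlonglongrightarrow> 0"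
  shows "(\<lambda>k. \<integral>x. ((F k x - G x) \<bullet> i)\<^sup>2 \<partial>M) \<longlonglongrightarrow> 0"
proof -
  have dist: "square_integrable M (\<lambda>x. norm (F k x - G x))" for k
    by (rule square_integrable_bound[OF square_integrable_add[OF F[of k] G], where C = 1])
      (use norm_triangle_ineq4 in auto)
  have inner: "square_integrable M (\<lambda>x. (F k x - G x) \<bullet> i)" for k
  proof (rule square_integrable_bound[OF dist[of k], where C = "norm i"])
    show "AE x in M. \<bar>(F k x - G x) \<bullet> i\<bar> \<le> norm i * \<bar>norm (F k x - G x)\<bar>"
      by (intro AE_I2) (metis Cauchy_Schwarz_ineq2 abs_norm_cancel mult.commute)
  qed measurable
  have "(\<integral>x. ((F k x - G x) \<bullet> i)\<^sup>2 \<partial>M) \<le> (\<integral>x. (norm i)\<^sup>2 * (norm (F k x - G x))\<^sup>2 \<partial>M)" for k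
  proof (rule integral_mono)
    show "integrable M (\<lambda>x. ((F k x - G x) \<bullet> i)\<^sup>2)" using inner by (simp add: square_integrable_def)
    show "integrable M (\<lambda>x. (norm i)\<^sup>2 * (norm (F k x - G x))\<^sup>2)" using dist by (simp add: square_integrable_def)
    fix x
    have "\<bar>(F k x - G x) \<bullet> i\<bar> \<le> \<bar>norm i * norm (F k x - G x)\<bar>"
      using Cauchy_Schwarz_ineq2[of "F k x - G x" i] by (simp add: mult.commute)
    then show "((F k x - G x) \<bullet> i)\<^sup>2 \<le> (norm i)\<^sup>2 * (norm (F k x - G x))\<^sup>2"
      by (simp only: abs_le_square_iff power_mult_distrib)
  qed
  then have upper: "\<forall>\<^sub>F k in sequentially.
      (\<integral>x. ((F k x - G x) \<bullet> i)\<^sup>2 \<partial>M) \<le> (norm i)\<^sup>2 * (\<integral>x. (norm (F k x - G x))\<^sup>2 \<partial>M)"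
    by simp
  show ?thesis
    by (rule tendsto_sandwich[OF _ upper tendsto_const tendsto_mult_right_zero[OF lim]]) simp
qed

lemma set_integral_eq_restrict_space:
  fixes f :: "'a \<Rightarrow> 'b::{banach, second_countable_topology}"
  assumes "\<Omega> \<in> sets M"
  shows "(LINT x:\<Omega>|M. f x) = integral\<^sup>L (restrict_space M \<Omega>) f"
  unfolding set_lebesgue_integral_def using assms by (simp add: integral_restrict_space)

lemma set_integrable_iff_restrict_space:
  fixes f :: "'a \<Rightarrow> 'b::{banach, second_countable_topology}"
  assumes "\<Omega> \<in> sets M"
  shows "set_integrable M \<Omega> f \<longleftrightarrow> integrable (restrict_space M \<Omega>) f"
  unfolding set_integrable_def using assms by (simp add: integrable_restrict_space)

lemma set_borel_measurable_iff_restrict_space: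
  fixes f :: "'a \<Rightarrow> 'b::{banach, second_countable_topology}"
  assumes "\<Omega> \<in> sets M"
  shows "set_borel_measurable M \<Omega> f \<longleftrightarrow> f \<in> borel_measurable (restrict_space M \<Omega>)"
  unfolding set_borel_measurable_def using assms by (simp add: borel_measurable_restrict_space_iff)

lemma smooth_on_UNIV_has_derivative:
  assumes "smooth_on UNIV \<phi>"
  shows "(\<phi> has_derivative frechet_derivative \<phi> (at x)) (at x)"
proof -
  from assms have "\<phi> differentiable_on UNIV" by (cases rule: smooth_on.cases) auto
  then show ?thesis by (simp add: differentiable_on_def frechet_derivative_works[symmetric])
qed

lemma smooth_on_continuous_on:
  assumes "smooth_on U \<phi>"
  shows "continuous_on U \<phi>"
  using assms by (cases rule: smooth_on.cases) (auto intro: differentiable_imp_continuous_on)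

lemma smooth_on_partial:
  assumes "smooth_on U \<phi>" "i \<in> Basis"
  shows "smooth_on U (\<lambda>x. frechet_derivative \<phi> (at x) i)"
  using assms by (cases rule: smooth_on.cases) auto

lemma smooth_on_lincomb:
  fixes \<phi> \<psi> :: "'a::euclidean_space \<Rightarrow> real"
  assumes "smooth_on UNIV \<phi>" "smooth_on UNIV \<psi>"
  shows "smooth_on UNIV (\<lambda>x. a * \<phi> x + b * \<psi> x)"
proof -
  define X where "X = (\<lambda>(U::'a set) (g::'a \<Rightarrow> real). U = UNIV \<and> (\<exists>a b \<phi> \<psi>.
      smooth_on UNIV \<phi> \<and> smooth_on UNIV \<psi> \<and> g = (\<lambda>x. a * \<phi> x + b * \<psi> x)))"
  have "X UNIV (\<lambda>x. a * \<phi> x + b * \<psi> x)" using assms unfolding X_def by blast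
  then show ?thesis
  proof (rule smooth_on.coinduct[of X])
    fix U g assume "X U g"
    then obtain a b \<phi> \<psi> where U: "U = UNIV" and s: "smooth_on UNIV \<phi>" "smooth_on UNIV \<psi>"
      and g: "g = (\<lambda>x. a * \<phi> x + b * \<psi> x)" unfolding X_def by blast
    have d: "(g has_derivative (\<lambda>h. a * frechet_derivative \<phi> (at x) h + b * frechet_derivative \<psi> (at x) h)) (at x)" for x
      unfolding g by (intro has_derivative_add has_derivative_mult_right smooth_on_UNIV_has_derivative s)
    have "g differentiable_on UNIV" using d unfolding differentiable_on_def differentiable_def by blast
    moreover have "X UNIV (\<lambda>x. frechet_derivative g (at x) i)" if "i \<in> Basis" for i
      unfolding X_def frechet_derivative_at[OF d, symmetric]
      using smooth_on_partial[OF s(1) that] smooth_on_partial[OF s(2) that] by blast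
    ultimately show "\<exists>f U'. U = U' \<and> g = f \<and> f differentiable_on U' \<and>
        (\<forall>i\<in>Basis. X U' (\<lambda>x. frechet_derivative f (at x) i) \<or> smooth_on U' (\<lambda>x. frechet_derivative f (at x) i))"
      using U by blast
  qed
qed

lemma smooth_on_mult_inner_add:
  fixes \<phi> \<psi> :: "'a::euclidean_space \<Rightarrow> real"
  assumes "smooth_on UNIV \<phi>" "smooth_on UNIV \<psi>"
  shows "smooth_on UNIV (\<lambda>x. \<phi> x * (x \<bullet> i) + \<psi> x)"
proof -
  define X where "X = (\<lambda>(U::'a set) (g::'a \<Rightarrow> real). U = UNIV \<and> (\<exists>\<phi> \<psi>.
      smooth_on UNIV \<phi> \<and> smooth_on UNIV \<psi> \<and> g = (\<lambda>x. \<phi> x * (x \<bullet> i) + \<psi> x)))"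
  have "X UNIV (\<lambda>x. \<phi> x * (x \<bullet> i) + \<psi> x)" using assms unfolding X_def by blast
  then show ?thesis
  proof (rule smooth_on.coinduct[of X])
    fix U g assume "X U g"
    then obtain \<phi> \<psi> where U: "U = UNIV" and s: "smooth_on UNIV \<phi>" "smooth_on UNIV \<psi>"
      and g: "g = (\<lambda>x. \<phi> x * (x \<bullet> i) + \<psi> x)" unfolding X_def by blast
    have d: "(g has_derivative (\<lambda>h. \<phi> x * (h \<bullet> i) + frechet_derivative \<phi> (at x) h * (x \<bullet> i)
        + frechet_derivative \<psi> (at x) h)) (at x)" for x
      unfolding g by (intro has_derivative_add has_derivative_mult smooth_on_UNIV_has_derivative s)
        (auto intro!: derivative_eq_intros)
    have "g differentiable_on UNIV" using d unfolding differentiable_on_def differentiable_def by blast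
    moreover have "X UNIV (\<lambda>x. frechet_derivative g (at x) j)" if "j \<in> Basis" for j
    proof -
      have "smooth_on UNIV (\<lambda>x. (j \<bullet> i) * \<phi> x + 1 * frechet_derivative \<psi> (at x) j)"
        by (intro smooth_on_lincomb s smooth_on_partial[OF s(2) that])
      moreover have "(\<lambda>x. frechet_derivative g (at x) j) = (\<lambda>x. frechet_derivative \<phi> (at x) j * (x \<bullet> i)
          + ((j \<bullet> i) * \<phi> x + 1 * frechet_derivative \<psi> (at x) j))"
        unfolding frechet_derivative_at[OF d, symmetric] by (auto simp: algebra_simps fun_eq_iff)
      ultimately show ?thesis unfolding X_def using smooth_on_partial[OF s(1) that] by blast
    qed
    ultimately show "\<exists>f U'. U = U' \<and> g = f \<and> f differentiable_on U' \<and>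
        (\<forall>i\<in>Basis. X U' (\<lambda>x. frechet_derivative f (at x) i) \<or> smooth_on U' (\<lambda>x. frechet_derivative f (at x) i))"
      using U by blast
  qed
qed

lemma sgrad_inner_Basis:
  assumes "i \<in> Basis"
  shows "sgrad \<phi> x \<bullet> i = frechet_derivative \<phi> (at x) i"
  unfolding sgrad_def using assms by (simp add: inner_sum_left inner_Basis if_distrib cong: if_cong)

lemma continuous_on_sgrad:
  assumes "smooth_on UNIV \<phi>"
  shows "continuous_on UNIV (sgrad \<phi>)"
  unfolding sgrad_def[abs_def]
  by (intro continuous_on_sum continuous_on_scaleR continuous_on_const smooth_on_continuous_on
      smooth_on_partial[OF assms])

lemma test_fun_mult_inner:
  assumes "test_fun \<Omega> \<phi>"
  shows "test_fun \<Omega> (\<lambda>x. \<phi> x * (x \<bullet> i))"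
proof -
  have s: "smooth_on UNIV \<phi>" using assms by (simp add: test_fun_def)
  have "smooth_on UNIV (\<lambda>x. \<phi> x * (x \<bullet> i) + (0 * \<phi> x + 0 * \<phi> x))"
    by (intro smooth_on_mult_inner_add smooth_on_lincomb s)
  then have "smooth_on UNIV (\<lambda>x. \<phi> x * (x \<bullet> i))" by simp
  moreover have sub: "closure {x. \<phi> x * (x \<bullet> i) \<noteq> 0} \<subseteq> closure {x. \<phi> x \<noteq> 0}"
    by (rule closure_mono) auto
  moreover have "compact (closure {x. \<phi> x * (x \<bullet> i) \<noteq> 0})"
    using assms sub compact_Int_closed[of "closure {x. \<phi> x \<noteq> 0}" "closure {x. \<phi> x * (x \<bullet> i) \<noteq> 0}"] unfolding test_fun_def by (simp add: Int_absorb1)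
  ultimately show ?thesis using assms unfolding test_fun_def by blast
qed

lemma sgrad_mult_inner_Basis:
  assumes "smooth_on UNIV \<phi>" "i \<in> Basis"
  shows "sgrad (\<lambda>x. \<phi> x * (x \<bullet> i)) x \<bullet> i = \<phi> x + (sgrad \<phi> x \<bullet> i) * (x \<bullet> i)"
proof -
  have "((\<lambda>x. \<phi> x * (x \<bullet> i)) has_derivative
      (\<lambda>h. \<phi> x * (h \<bullet> i) + frechet_derivative \<phi> (at x) h * (x \<bullet> i))) (at x)"
    by (intro has_derivative_mult smooth_on_UNIV_has_derivative assms(1)) (auto intro!: derivative_eq_intros)
  then show ?thesis
    using assms(2) by (simp add: sgrad_inner_Basis frechet_derivative_at[symmetric])
qed

section \<open>A Poincare inequality on \<open>H\<^sub>0\<^sup>1\<close>\<close>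

lemma wgrad_weak_grad:
  assumes "u \<in> H01 \<Omega>"
  shows "weak_grad \<Omega> u (wgrad \<Omega> u)"
proof -
  from assms obtain G where "weak_grad \<Omega> u G" unfolding H01_def by blast
  then show ?thesis unfolding wgrad_def by (rule someI[where P = "weak_grad \<Omega> u"])
qed

lemma H01_square_integrable:
  assumes "\<Omega> \<in> sets lebesgue" "u \<in> H01 \<Omega>"
  shows "square_integrable (lebesgue_on \<Omega>) u"
  using assms(2) unfolding H01_def square_integrable_def set_borel_measurable_iff_restrict_space[OF assms(1)]
    set_integrable_iff_restrict_space[OF assms(1)] by blast

context
  fixes \<Omega> :: "'a::euclidean_space set"
  assumes \<Omega>_sets: "\<Omega> \<in> sets lebesgue" and \<Omega>_bounded: "bounded \<Omega>"
begin

lemma continuous_square_integrable_on: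
  fixes g :: "'a \<Rightarrow> real"
  assumes g: "continuous_on UNIV g"
  shows "square_integrable (lebesgue_on \<Omega>) g"
  unfolding square_integrable_def
proof
  show m [measurable]: "g \<in> borel_measurable (lebesgue_on \<Omega>)"
    by (rule continuous_imp_measurable_on_sets_lebesgue[OF continuous_on_subset[OF g] \<Omega>_sets]) simp
  have "bounded (g ` closure \<Omega>)"
    using \<Omega>_bounded by (intro compact_imp_bounded compact_continuous_image continuous_on_subset[OF g]) auto
  then obtain B where B: "\<And>x. x \<in> \<Omega> \<Longrightarrow> \<bar>g x\<bar> \<le> B"
    using closure_subset unfolding bounded_iff by fastforce
  show "integrable (lebesgue_on \<Omega>) (\<lambda>x. (g x)\<^sup>2)"
  proof (rule finite_measure.integrable_const_bound[where B = "B\<^sup>2"])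
    show "finite_measure (lebesgue_on \<Omega>)"
      by (intro finite_measure_lebesgue_on bounded_set_imp_lmeasurable \<Omega>_bounded \<Omega>_sets)
    have "(g x)\<^sup>2 \<le> B\<^sup>2" if "x \<in> \<Omega>" for x
      using power_mono[OF B[OF that], of 2] by simp
    then show "AE x in lebesgue_on \<Omega>. norm ((g x)\<^sup>2) \<le> B\<^sup>2" by (intro AE_I2) simp
  qed measurable
qed

lemma square_integrable_mult_inner:
  assumes g: "square_integrable (lebesgue_on \<Omega>) g"
  shows "square_integrable (lebesgue_on \<Omega>) (\<lambda>x. g x * (x \<bullet> i))"
proof -
  obtain R where R: "\<And>x. x \<in> \<Omega> \<Longrightarrow> norm x \<le> R" using \<Omega>_bounded by (auto simp: bounded_iff)
  show ?thesis
  proof (rule square_integrable_bound[OF g, where C = "R * norm i"])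
  have "\<bar>g x * (x \<bullet> i)\<bar> \<le> R * norm i * \<bar>g x\<bar>" if "x \<in> \<Omega>" for x
  proof -
    have "\<bar>x \<bullet> i\<bar> \<le> R * norm i"
      using Cauchy_Schwarz_ineq2[of x i] mult_right_mono[OF R[OF that] norm_ge_zero[of i]] by linarith
    then show ?thesis by (simp add: abs_mult mult.commute mult_left_mono)
  qed
  then show "AE x in lebesgue_on \<Omega>. \<bar>g x * (x \<bullet> i)\<bar> \<le> R * norm i * \<bar>g x\<bar>" by (intro AE_I2) simp
  have [measurable]: "(\<lambda>x. x \<bullet> i) \<in> borel_measurable (lebesgue_on \<Omega>)"
    by (intro continuous_imp_measurable_on_sets_lebesgue \<Omega>_sets continuous_intros)
  have [measurable]: "g \<in> borel_measurable (lebesgue_on \<Omega>)"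
    using g by (simp add: square_integrable_def)
  show "(\<lambda>x. g x * (x \<bullet> i)) \<in> borel_measurable (lebesgue_on \<Omega>)" by measurable
  qed
qed

lemma smooth_on_square_integrable:
  assumes "smooth_on UNIV \<phi>"
  shows "square_integrable (lebesgue_on \<Omega>) \<phi>"
    and "sgrad \<phi> \<in> borel_measurable (lebesgue_on \<Omega>)"
    and "square_integrable (lebesgue_on \<Omega>) (\<lambda>x. norm (sgrad \<phi> x))"
    and "square_integrable (lebesgue_on \<Omega>) (\<lambda>x. sgrad \<phi> x \<bullet> i)"
proof -
  note grad = continuous_on_sgrad[OF assms]
  show "square_integrable (lebesgue_on \<Omega>) \<phi>"
    by (intro continuous_square_integrable_on smooth_on_continuous_on assms)
  show "sgrad \<phi> \<in> borel_measurable (lebesgue_on \<Omega>)"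
    by (rule continuous_imp_measurable_on_sets_lebesgue[OF continuous_on_subset[OF grad] \<Omega>_sets]) simp
  show "square_integrable (lebesgue_on \<Omega>) (\<lambda>x. norm (sgrad \<phi> x))"
    by (intro continuous_square_integrable_on continuous_on_norm grad)
  show "square_integrable (lebesgue_on \<Omega>) (\<lambda>x. sgrad \<phi> x \<bullet> i)"
    by (intro continuous_square_integrable_on continuous_on_inner grad continuous_on_const)
qed

lemma weak_grad_square_integrable:
  assumes "weak_grad \<Omega> u H"
  shows "H \<in> borel_measurable (lebesgue_on \<Omega>)"
    and "square_integrable (lebesgue_on \<Omega>) (\<lambda>x. norm (H x))"
    and "square_integrable (lebesgue_on \<Omega>) (\<lambda>x. H x \<bullet> i)"
proof -
  show H [measurable]: "H \<in> borel_measurable (lebesgue_on \<Omega>)"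
    using assms unfolding weak_grad_def set_borel_measurable_iff_restrict_space[OF \<Omega>_sets] by blast
  then have "(\<lambda>x. norm (H x)) \<in> borel_measurable (lebesgue_on \<Omega>)" by measurable
  moreover have "integrable (lebesgue_on \<Omega>) (\<lambda>x. (norm (H x))\<^sup>2)"
    using assms unfolding weak_grad_def set_integrable_iff_restrict_space[OF \<Omega>_sets] by blast
  ultimately show norm: "square_integrable (lebesgue_on \<Omega>) (\<lambda>x. norm (H x))"
    unfolding square_integrable_def ..
  show "square_integrable (lebesgue_on \<Omega>) (\<lambda>x. H x \<bullet> i)"
  proof (rule square_integrable_bound[OF norm, where C = "norm i"])
    show "AE x in lebesgue_on \<Omega>. \<bar>H x \<bullet> i\<bar> \<le> norm i * \<bar>norm (H x)\<bar>"
      by (intro AE_I2) (simp add: mult.commute[of "norm i"] Cauchy_Schwarz_ineq2)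
  qed (use H in simp)
qed

lemma weak_grad_integral_mult_inner:
  assumes u: "square_integrable (lebesgue_on \<Omega>) u" and H: "weak_grad \<Omega> u H"
    and \<phi>: "test_fun \<Omega> \<phi>" and i: "i \<in> Basis"
  shows "(\<integral>x. \<phi> x * u x \<partial>lebesgue_on \<Omega>) + (\<integral>x. (sgrad \<phi> x \<bullet> i) * (u x * (x \<bullet> i)) \<partial>lebesgue_on \<Omega>)
    = - (\<integral>x. \<phi> x * ((H x \<bullet> i) * (x \<bullet> i)) \<partial>lebesgue_on \<Omega>)"
proof -
  have s: "smooth_on UNIV \<phi>" using \<phi> by (simp add: test_fun_def)
  have "(LINT x:\<Omega>|lebesgue. u x * (sgrad (\<lambda>x. \<phi> x * (x \<bullet> i)) x \<bullet> i))
      = - (LINT x:\<Omega>|lebesgue. (H x \<bullet> i) * (\<phi> x * (x \<bullet> i)))"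
    using H test_fun_mult_inner[OF \<phi>] i unfolding weak_grad_def by blast
  then have "(\<integral>x. u x * (\<phi> x + (sgrad \<phi> x \<bullet> i) * (x \<bullet> i)) \<partial>lebesgue_on \<Omega>)
      = - (\<integral>x. \<phi> x * ((H x \<bullet> i) * (x \<bullet> i)) \<partial>lebesgue_on \<Omega>)"
    by (simp add: set_integral_eq_restrict_space[OF \<Omega>_sets] sgrad_mult_inner_Basis[OF s i] ac_simps)
  moreover have "(\<integral>x. u x * (\<phi> x + (sgrad \<phi> x \<bullet> i) * (x \<bullet> i)) \<partial>lebesgue_on \<Omega>)
      = (\<integral>x. \<phi> x * u x \<partial>lebesgue_on \<Omega>) + (\<integral>x. (sgrad \<phi> x \<bullet> i) * (u x * (x \<bullet> i)) \<partial>lebesgue_on \<Omega>)"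
    using square_integrable_mult_integrable[OF smooth_on_square_integrable(1)[OF s] u]
      square_integrable_mult_integrable[OF smooth_on_square_integrable(4)[OF s] square_integrable_mult_inner[OF u]]
    by (simp add: algebra_simps)
  ultimately show ?thesis by simp
qed

lemma H01_approx_identity:
  fixes \<phi> :: "nat \<Rightarrow> 'a \<Rightarrow> real"
  assumes u: "square_integrable (lebesgue_on \<Omega>) u"
    and G: "weak_grad \<Omega> u G" and H: "weak_grad \<Omega> u H"
    and \<phi>: "\<And>k. test_fun \<Omega> (\<phi> k)"
    and lim_u: "(\<lambda>k. \<integral>x. (\<phi> k x - u x)\<^sup>2 \<partial>lebesgue_on \<Omega>) \<longlonglongrightarrow> 0"
    and lim_grad: "(\<lambda>k. \<integral>x. (norm (sgrad (\<phi> k) x - G x))\<^sup>2 \<partial>lebesgue_on \<Omega>) \<longlonglongrightarrow> 0"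
    and i: "i \<in> Basis"
  shows "(\<integral>x. (u x)\<^sup>2 \<partial>lebesgue_on \<Omega>) + (\<integral>x. (G x \<bullet> i) * (u x * (x \<bullet> i)) \<partial>lebesgue_on \<Omega>)
    = - (\<integral>x. u x * ((H x \<bullet> i) * (x \<bullet> i)) \<partial>lebesgue_on \<Omega>)"
proof -
  have s: "smooth_on UNIV (\<phi> k)" for k using \<phi> by (simp add: test_fun_def)
  note \<phi>_L2 = smooth_on_square_integrable[OF s]
  have lim_partial: "(\<lambda>k. \<integral>x. ((sgrad (\<phi> k) x \<bullet> i) - (G x \<bullet> i))\<^sup>2 \<partial>lebesgue_on \<Omega>) \<longlonglongrightarrow> 0"
    using tendsto_inner_square_integral[OF \<phi>_L2(2) weak_grad_square_integrable(1)[OF G]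
        \<phi>_L2(3) weak_grad_square_integrable(2)[OF G] lim_grad, of i]
    by (simp add: inner_diff_left)
  have "(\<lambda>k. (\<integral>x. \<phi> k x * u x \<partial>lebesgue_on \<Omega>) + (\<integral>x. (sgrad (\<phi> k) x \<bullet> i) * (u x * (x \<bullet> i)) \<partial>lebesgue_on \<Omega>))
      \<longlonglongrightarrow> (\<integral>x. u x * u x \<partial>lebesgue_on \<Omega>) + (\<integral>x. (G x \<bullet> i) * (u x * (x \<bullet> i)) \<partial>lebesgue_on \<Omega>)"
    by (intro tendsto_add tendsto_integral_mult_square_integrable u \<phi>_L2 lim_u lim_partial
        weak_grad_square_integrable[OF G] square_integrable_mult_inner)
  moreover have "(\<lambda>k. - (\<integral>x. \<phi> k x * ((H x \<bullet> i) * (x \<bullet> i)) \<partial>lebesgue_on \<Omega>))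
      \<longlonglongrightarrow> - (\<integral>x. u x * ((H x \<bullet> i) * (x \<bullet> i)) \<partial>lebesgue_on \<Omega>)"
    by (intro tendsto_minus tendsto_integral_mult_square_integrable u \<phi>_L2 lim_u
        square_integrable_mult_inner weak_grad_square_integrable[OF H])
  ultimately show ?thesis
    using weak_grad_integral_mult_inner[OF u H \<phi> i] LIMSEQ_unique by (simp add: power2_eq_square)
qed

lemma H01_inner_identity:
  assumes u: "u \<in> H01 \<Omega>" and H: "weak_grad \<Omega> u H" and i: "i \<in> Basis"
  shows "(\<integral>x. (u x)\<^sup>2 \<partial>lebesgue_on \<Omega>) = -2 * (\<integral>x. u x * ((H x \<bullet> i) * (x \<bullet> i)) \<partial>lebesgue_on \<Omega>)"
proof -
  obtain G \<phi> where G: "weak_grad \<Omega> u G" and \<phi>: "\<And>k. test_fun \<Omega> (\<phi> k)"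
    and lim_u: "(\<lambda>k. LINT x:\<Omega>|lebesgue. (\<phi> k x - u x)\<^sup>2) \<longlonglongrightarrow> 0"
    and lim_grad: "(\<lambda>k. LINT x:\<Omega>|lebesgue. (norm (sgrad (\<phi> k) x - G x))\<^sup>2) \<longlonglongrightarrow> 0"
    using u unfolding H01_def by blast
  note identity = H01_approx_identity[OF H01_square_integrable[OF \<Omega>_sets u] G _ \<phi> lim_u[unfolded set_integral_eq_restrict_space[OF \<Omega>_sets]]
      lim_grad[unfolded set_integral_eq_restrict_space[OF \<Omega>_sets]] i]
  \<comment> \<open>The approximating gradient G need not be H; the identity for G itself evaluates the G-term.\<close>
  have "(\<integral>x. (G x \<bullet> i) * (u x * (x \<bullet> i)) \<partial>lebesgue_on \<Omega>) = (\<integral>x. u x * ((G x \<bullet> i) * (x \<bullet> i)) \<partial>lebesgue_on \<Omega>)"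
    by (simp add: ac_simps)
  then show ?thesis using identity[OF G] identity[OF H] by linarith
qed

lemma weak_grad_moment_le:
  assumes H: "weak_grad \<Omega> u H" and i: "i \<in> Basis" and R: "\<And>x. x \<in> \<Omega> \<Longrightarrow> norm x \<le> R"
  shows "(\<integral>x. ((H x \<bullet> i) * (x \<bullet> i))\<^sup>2 \<partial>lebesgue_on \<Omega>) \<le> R\<^sup>2 * (\<integral>x. (norm (H x))\<^sup>2 \<partial>lebesgue_on \<Omega>)"
proof -
  note HL2 = weak_grad_square_integrable[OF H]
  have "(\<integral>x. ((H x \<bullet> i) * (x \<bullet> i))\<^sup>2 \<partial>lebesgue_on \<Omega>) \<le> (\<integral>x. R\<^sup>2 * (norm (H x))\<^sup>2 \<partial>lebesgue_on \<Omega>)"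
  proof (rule integral_mono)
    show "integrable (lebesgue_on \<Omega>) (\<lambda>x. ((H x \<bullet> i) * (x \<bullet> i))\<^sup>2)"
      using square_integrable_mult_inner[OF HL2(3)] by (simp add: square_integrable_def)
    show "integrable (lebesgue_on \<Omega>) (\<lambda>x. R\<^sup>2 * (norm (H x))\<^sup>2)"
      using HL2(2) by (simp add: square_integrable_def)
    fix x assume "x \<in> space (lebesgue_on \<Omega>)"
    then have "\<bar>x \<bullet> i\<bar> \<le> \<bar>R\<bar>" using R Basis_le_norm[OF i, of x] by fastforce
    moreover have "\<bar>H x \<bullet> i\<bar> \<le> \<bar>norm (H x)\<bar>" using Basis_le_norm[OF i] by simp
    ultimately have "\<bar>(H x \<bullet> i) * (x \<bullet> i)\<bar> \<le> \<bar>R * norm (H x)\<bar>"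
      unfolding abs_mult by (simp add: mult.commute mult_mono)
    then show "((H x \<bullet> i) * (x \<bullet> i))\<^sup>2 \<le> R\<^sup>2 * (norm (H x))\<^sup>2"
      by (simp only: abs_le_square_iff power_mult_distrib)
  qed
  then show ?thesis by simp
qed

lemma poincare_H01:
  assumes u: "u \<in> H01 \<Omega>" and R: "\<And>x. x \<in> \<Omega> \<Longrightarrow> norm x \<le> R"
  shows "(LINT x:\<Omega>|lebesgue. (u x)\<^sup>2) \<le> 4 * R\<^sup>2 * dirichlet \<Omega> u"
proof -
  obtain i :: 'a where i: "i \<in> Basis" using nonempty_Basis by blast
  define H where "H = wgrad \<Omega> u"
  have H_grad: "weak_grad \<Omega> u H" unfolding H_def by (rule wgrad_weak_grad[OF u])
  note u_L2 = H01_square_integrable[OF \<Omega>_sets u]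
  note HL2 = weak_grad_square_integrable[OF H_grad]
  define S where "S = (\<integral>x. (u x)\<^sup>2 \<partial>lebesgue_on \<Omega>)"
  define D where "D = (\<integral>x. (norm (H x))\<^sup>2 \<partial>lebesgue_on \<Omega>)"
  define r where "r = (\<integral>x. u x * ((H x \<bullet> i) * (x \<bullet> i)) \<partial>lebesgue_on \<Omega>)"
  have "S \<ge> 0" "D \<ge> 0" unfolding S_def D_def by simp_all
  have S_r: "S = -2 * r" unfolding S_def r_def by (rule H01_inner_identity[OF u H_grad i])
  have moment: "(\<integral>x. ((H x \<bullet> i) * (x \<bullet> i))\<^sup>2 \<partial>lebesgue_on \<Omega>) \<le> R\<^sup>2 * D"
    unfolding D_def by (rule weak_grad_moment_le[OF H_grad i R])
  have "\<bar>r\<bar> \<le> \<bar>\<integral>x. \<bar>u x * ((H x \<bullet> i) * (x \<bullet> i))\<bar> \<partial>lebesgue_on \<Omega>\<bar>"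
    unfolding r_def by (rule order_trans[OF integral_abs_bound abs_ge_self])
  then have "r\<^sup>2 \<le> (\<integral>x. \<bar>u x * ((H x \<bullet> i) * (x \<bullet> i))\<bar> \<partial>lebesgue_on \<Omega>)\<^sup>2"
    by (simp only: abs_le_square_iff)
  also have "\<dots> \<le> S * (\<integral>x. ((H x \<bullet> i) * (x \<bullet> i))\<^sup>2 \<partial>lebesgue_on \<Omega>)"
    unfolding S_def by (rule Cauchy_Schwarz_integral[OF u_L2 square_integrable_mult_inner[OF HL2(3)]])
  also have "\<dots> \<le> S * (R\<^sup>2 * D)"
    using \<open>S \<ge> 0\<close> moment by (intro mult_left_mono)
  finally have "S * S \<le> S * (4 * R\<^sup>2 * D)" using S_r by (simp add: power2_eq_square algebra_simps)
  then have "S \<le> 4 * R\<^sup>2 * D"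
    using \<open>S \<ge> 0\<close> \<open>D \<ge> 0\<close> by (cases "S = 0") (auto simp: mult_le_cancel_left)
  then show ?thesis
    unfolding S_def D_def H_def dirichlet_def set_integral_eq_restrict_space[OF \<Omega>_sets] .
qed

end

section \<open>The energy on the constraint set\<close>

lemma Fplus_eq_prim:
  assumes "0 \<le> t"
  shows "Fplus f t = prim f t"
proof -
  have "integral {0..t} (fplus f) = integral {0..t} f"
    by (rule integral_cong) (simp add: fplus_def)
  then show ?thesis using assms by (simp add: Fplus_def prim_def)
qed

lemma Fplus_nonpos:
  assumes "t \<le> 0" and "f 0 = 0"
  shows "Fplus f t = 0"
proof -
  have "integral {t..0} (fplus f) = integral {t..0} (\<lambda>_. 0)"
    by (rule integral_cong) (use assms in \<open>auto simp: fplus_def\<close>)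
  then show ?thesis using assms by (cases "t = 0") (simp_all add: Fplus_def prim_def)
qed

lemma Fplus_bounds:
  fixes f :: "real \<Rightarrow> real"
  assumes f0: "f 0 = 0" and \<alpha>: "0 < \<alpha>"
    and AR: "\<forall>u. u \<noteq> 0 \<longrightarrow> 0 < \<alpha> * prim f u \<and> \<alpha> * prim f u \<le> f u * u \<and> f u * u \<le> \<beta> * prim f u"
  shows "0 \<le> Fplus f t" "\<alpha> * Fplus f t \<le> fplus f t * max t 0" "fplus f t * max t 0 \<le> \<beta> * Fplus f t"
proof -
  have "0 \<le> Fplus f t \<and> \<alpha> * Fplus f t \<le> fplus f t * max t 0 \<and> fplus f t * max t 0 \<le> \<beta> * Fplus f t"
  proof (cases "0 < t")
    case True
    then have "0 < \<alpha> * prim f t" "\<alpha> * prim f t \<le> f t * t" "f t * t \<le> \<beta> * prim f t" using AR by auto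
    moreover from this(1) have "0 \<le> prim f t" using \<alpha> by (simp add: zero_less_mult_iff)
    ultimately show ?thesis using True by (simp add: Fplus_eq_prim fplus_def)
  next
    case False
    then show ?thesis using Fplus_nonpos[of t f] f0 by (simp add: max_def)
  qed
  then show "0 \<le> Fplus f t" "\<alpha> * Fplus f t \<le> fplus f t * max t 0" "fplus f t * max t 0 \<le> \<beta> * Fplus f t"
    by auto
qed

lemma borel_measurable_fplus:
  assumes "continuous_on UNIV f"
  shows "fplus f \<in> borel_measurable borel"
proof -
  have [measurable]: "f \<in> borel_measurable borel" by (rule borel_measurable_continuous_onI[OF assms])
  show ?thesis unfolding fplus_def[abs_def] by measurable
qed

text \<open>No integrability of g is assumed: if g is not integrable, its integral is 0 and the
  claim reduces to the nonnegativity of h.\<close>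
lemma integral_mult_le_of_bounds:
  fixes g h :: "'a \<Rightarrow> real"
  assumes h: "h \<in> borel_measurable M" and a: "0 \<le> a"
    and g: "\<And>x. 0 \<le> g x" and lower: "\<And>x. a * g x \<le> h x" and upper: "\<And>x. h x \<le> b * g x"
  shows "a * (\<integral>x. g x \<partial>M) \<le> (\<integral>x. h x \<partial>M)"
proof -
  have h_nonneg: "0 \<le> h x" for x using lower[of x] mult_nonneg_nonneg[OF a g[of x]] by linarith
  show ?thesis
  proof (cases "integrable M g")
    case True
    have "integrable M h"
    proof (rule Bochner_Integration.integrable_bound[OF _ h])
      show "integrable M (\<lambda>x. b * g x)" using True by simp
      have "norm (h x) \<le> norm (b * g x)" for x
        unfolding real_norm_def abs_of_nonneg[OF h_nonneg] using upper[of x] abs_ge_self[of "b * g x"] by linarith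
      then show "AE x in M. norm (h x) \<le> norm (b * g x)" by simp
    qed
    have "a * (\<integral>x. g x \<partial>M) = (\<integral>x. a * g x \<partial>M)" by simp
    also have "\<dots> \<le> (\<integral>x. h x \<partial>M)"
      by (rule integral_mono) (use True \<open>integrable M h\<close> lower in auto)
    finally show ?thesis .
  next
    case False
    then show ?thesis using h_nonneg by (simp add: not_integrable_integral_eq)
  qed
qed

lemma Gset_energy_lower_bound:
  fixes \<Omega> :: "'a::euclidean_space set"
  assumes \<Omega>: "\<Omega> \<in> sets lebesgue" and u: "u \<in> Gset \<Omega> f c"
    and fcont: "continuous_on UNIV f" and f0: "f 0 = 0" and \<alpha>: "2 < \<alpha>"
    and AR: "\<forall>u. u \<noteq> 0 \<longrightarrow> 0 < \<alpha> * prim f u \<and> \<alpha> * prim f u \<le> f u * u \<and> f u * u \<le> \<beta> * prim f u"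
  shows "(1/2 - 1 / (real DIM('a) * (\<alpha> / 2 - 1))) * dirichlet \<Omega> u \<le> energy \<Omega> f u"
proof -
  define N where "N = real DIM('a)"
  define m where "m = N * (\<alpha> / 2 - 1)"
  define D where "D = dirichlet \<Omega> u"
  define A where "A = (\<integral>x. fplus f (u x) * max (u x) 0 \<partial>lebesgue_on \<Omega>)"
  define B where "B = (\<integral>x. Fplus f (u x) \<partial>lebesgue_on \<Omega>)"
  have m: "0 < m" using \<alpha> by (simp add: m_def N_def)
  have "square_integrable (lebesgue_on \<Omega>) u"
    using u by (simp add: Gset_def Sc_plus_def H01_square_integrable[OF \<Omega>])
  then have [measurable]: "u \<in> borel_measurable (lebesgue_on \<Omega>)" by (simp add: square_integrable_def)
  have [measurable]: "fplus f \<in> borel_measurable borel" by (rule borel_measurable_fplus[OF fcont])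
  note bounds = Fplus_bounds[OF f0 _ AR]
  have "\<alpha> * B \<le> A" unfolding A_def B_def
    by (rule integral_mult_le_of_bounds[where b = \<beta>]) (use \<alpha> bounds in auto)
  have "m * B = N / 2 * (\<alpha> * B) - N * B" by (simp add: m_def algebra_simps)
  also have "\<dots> \<le> N / 2 * A - N * B"
    using \<open>\<alpha> * B \<le> A\<close> by (simp add: N_def mult_left_mono)
  also have "\<dots> < D"
    using u unfolding Gset_def A_def B_def D_def N_def set_integral_eq_restrict_space[OF \<Omega>] by blast
  finally have "m * B < D" .
  then have "B \<le> D / m" using m by (simp add: field_simps)
  moreover have "energy \<Omega> f u = D / 2 - B"
    unfolding energy_def D_def B_def set_integral_eq_restrict_space[OF \<Omega>] ..
  moreover have "(1/2 - 1 / m) * D = D / 2 - D / m" by (simp add: algebra_simps)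
  ultimately show ?thesis unfolding D_def[symmetric] m_def[symmetric] N_def[symmetric] by linarith
qed

lemma Sc_plus_le_square_integral:
  assumes \<Omega>: "\<Omega> \<in> sets lebesgue" and u: "u \<in> Sc_plus \<Omega> c"
  shows "c \<le> (LINT x:\<Omega>|lebesgue. (u x)\<^sup>2)"
proof -
  have u_L2: "square_integrable (lebesgue_on \<Omega>) u"
    using u by (simp add: Sc_plus_def H01_square_integrable[OF \<Omega>])
  have pos_le: "\<bar>max (u x) 0\<bar> \<le> 1 * \<bar>u x\<bar>" for x by simp
  have "square_integrable (lebesgue_on \<Omega>) (\<lambda>x. max (u x) 0)"
  proof (rule square_integrable_bound[OF u_L2, where C = 1])
    show "AE x in lebesgue_on \<Omega>. \<bar>max (u x) 0\<bar> \<le> 1 * \<bar>u x\<bar>" using pos_le by simp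
  qed (use u_L2 in \<open>simp add: square_integrable_def borel_measurable_max\<close>)
  then have "(\<integral>x. (max (u x) 0)\<^sup>2 \<partial>lebesgue_on \<Omega>) \<le> (\<integral>x. (u x)\<^sup>2 \<partial>lebesgue_on \<Omega>)"
    using u_L2 abs_le_square_iff[THEN iffD1, OF pos_le[unfolded mult_1]]
    by (intro integral_mono) (auto simp: square_integrable_def)
  then show ?thesis
    using u unfolding Sc_plus_def set_integral_eq_restrict_space[OF \<Omega>] by simp
qed

lemma Gset_dirichlet_bounds:
  fixes \<Omega> :: "'a::euclidean_space set"
  assumes \<Omega>: "\<Omega> \<in> sets lebesgue" "bounded \<Omega>" and R: "\<And>x. x \<in> \<Omega> \<Longrightarrow> norm x \<le> R"
    and u: "u \<in> Gset \<Omega> f c"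
  shows "c \<le> 4 * R\<^sup>2 * dirichlet \<Omega> u" and "H1_norm2 \<Omega> u \<le> (4 * R\<^sup>2 + 1) * dirichlet \<Omega> u"
proof -
  have "u \<in> H01 \<Omega>" "u \<in> Sc_plus \<Omega> c" using u by (simp_all add: Gset_def Sc_plus_def)
  note poincare = poincare_H01[OF \<Omega> \<open>u \<in> H01 \<Omega>\<close> R]
  show "c \<le> 4 * R\<^sup>2 * dirichlet \<Omega> u"
    using Sc_plus_le_square_integral[OF \<Omega>(1) \<open>u \<in> Sc_plus \<Omega> c\<close>] poincare by linarith
  show "H1_norm2 \<Omega> u \<le> (4 * R\<^sup>2 + 1) * dirichlet \<Omega> u"
    using poincare unfolding H1_norm2_def by (simp add: algebra_simps)
qed

theorem lemma2p1:
  fixes \<Omega> :: "'a::euclidean_space set"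
    and f :: "real \<Rightarrow> real"
    and \<alpha> \<beta> c :: real
  assumes N3: "DIM('a) \<ge> 3"
    and dom: "smooth_bounded_domain \<Omega>"
    and star: "star_shaped_origin \<Omega>"
    and fcont: "continuous_on UNIV f"
    and f0: "f 0 = 0"
    and \<alpha>: "2 + 4 / real DIM('a) < \<alpha>"
    and \<alpha>\<beta>: "\<alpha> \<le> \<beta>"
    and \<beta>: "\<beta> < 2 * real DIM('a) / (real DIM('a) - 2)"
    and AR: "\<forall>u. u \<noteq> 0 \<longrightarrow> 0 < \<alpha> * prim f u \<and> \<alpha> * prim f u \<le> f u * u \<and> f u * u \<le> \<beta> * prim f u"
    and c: "c > 0"
  shows "(INF u\<in>Gset \<Omega> f c. ereal (energy \<Omega> f u)) > 0
     \<and> (\<forall>us :: nat \<Rightarrow> 'a \<Rightarrow> real. (\<forall>n. us n \<in> Gset \<Omega> f c)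
            \<and> limsup (\<lambda>n. ereal (energy \<Omega> f (us n))) < \<infinity>
          \<longrightarrow> (\<exists>C. \<forall>n. H1_norm2 \<Omega> (us n) \<le> C))"
proof -
  have "open \<Omega>" "bounded \<Omega>" using dom by (auto simp: smooth_bounded_domain_def)
  then have \<Omega>: "\<Omega> \<in> sets lebesgue" by (intro fmeasurableD lmeasurable_open)
  obtain R where R: "R > 0" "\<And>x. x \<in> \<Omega> \<Longrightarrow> norm x \<le> R"
    using \<open>bounded \<Omega>\<close> unfolding bounded_pos by blast
  define K where "K = 4 * R\<^sup>2"
  define \<kappa> where "\<kappa> = 1/2 - 1 / (real DIM('a) * (\<alpha> / 2 - 1))"
  have "2 < real DIM('a) * (\<alpha> / 2 - 1)" using \<alpha> by (simp add: field_simps)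
  then have "\<kappa> > 0" "K > 0" using R(1) by (simp_all add: \<kappa>_def K_def)
  have "0 \<le> 4 / real DIM('a)" by simp
  then have "2 < \<alpha>" using \<alpha> by linarith
  note energy = Gset_energy_lower_bound[OF \<Omega> _ fcont f0 this AR, folded \<kappa>_def]
  have dirichlet: "c \<le> K * dirichlet \<Omega> u" "H1_norm2 \<Omega> u \<le> (K + 1) * dirichlet \<Omega> u"
    if "u \<in> Gset \<Omega> f c" for u
    using Gset_dirichlet_bounds[OF \<Omega> \<open>bounded \<Omega>\<close> R(2) that] unfolding K_def by auto
  have "\<kappa> * (c / K) \<le> energy \<Omega> f u" if "u \<in> Gset \<Omega> f c" for u
  proof -
    have "c / K \<le> dirichlet \<Omega> u" using dirichlet(1)[OF that] \<open>K > 0\<close> by (simp add: field_simps)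
    then show ?thesis using energy[OF that] \<open>\<kappa> > 0\<close> by (meson mult_left_mono less_imp_le order_trans)
  qed
  then have "ereal (\<kappa> * (c / K)) \<le> (INF u\<in>Gset \<Omega> f c. ereal (energy \<Omega> f u))"
    by (intro INF_greatest) simp
  moreover have "0 < ereal (\<kappa> * (c / K))" using \<open>\<kappa> > 0\<close> \<open>K > 0\<close> c by simp
  moreover have "\<exists>C. \<forall>n. H1_norm2 \<Omega> (us n) \<le> C"
    if us: "\<forall>n. us n \<in> Gset \<Omega> f c" and bounded: "limsup (\<lambda>n. ereal (energy \<Omega> f (us n))) < \<infinity>" for us
  proof -
    obtain E where "\<And>n. energy \<Omega> f (us n) \<le> E" using limsup_finite_then_bounded[OF bounded] by blast
    then have "\<kappa> * dirichlet \<Omega> (us n) \<le> E" for n using energy us by (meson order_trans)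
    then have "dirichlet \<Omega> (us n) \<le> E / \<kappa>" for n using \<open>\<kappa> > 0\<close> by (simp add: field_simps)
    moreover have "0 \<le> K + 1" using \<open>K > 0\<close> by simp
    ultimately have "H1_norm2 \<Omega> (us n) \<le> (K + 1) * (E / \<kappa>)" for n
      using dirichlet(2)[of "us n"] us by (meson mult_left_mono order_trans)
    then show ?thesis by blast
  qed
  ultimately show ?thesis by (meson order.strict_trans2)
qed

end
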